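(* Let $(\mathcal{L},[\cdot,\cdot,\cdot]_{\mathcal{L}})$ be a (right) $3$-Leibniz algebra over a field $\mathbb{K}$ and $\overline{\mathcal{L}}=\mathbb{K}\oplus\mathcal{L}$. Let $R_1$ be the linear map on $(\mathbb{K}\oplus(\mathcal{L}\otimes\mathcal{L}))^{\otimes2}$ given by $R_1((a,x_1\otimes x_2)\otimes(b,y_1\otimes y_2))=(b,y_1\otimes y_2)\otimes(a,x_1\otimes x_2)+(1,0)\otimes(0,[x_1,y_1,y_2]_{\mathcal{L}}\otimes x_2+x_1\otimes[x_2,y_1,y_2]_{\mathcal{L}})$, and $R_2$ the linear map on $(\overline{\mathcal{L}}\otimes\overline{\mathcal{L}})^{\otimes2}$ given by $R_2((a_1,x_1)\otimes(a_2,x_2)\otimes(b_1,y_1)\otimes(b_2,y_2))=(b_1,y_1)\otimes(b_2,y_2)\otimes(a_1,x_1)\otimes(a_2,x_2)+(1,0)\otimes(1,0)\otimes\big((0,[x_1,y_1,y_2]_{\mathcal{L}})\otimes(a_2,x_2)+(a_1,x_1)\otimes(0,[x_2,y_1,y_2]_{\mathcal{L}})\big)$. Define the injective linear map $\mathfrak{s}:\mathbb{K}\oplus(\mathcal{L}\otimes\mathcal{L})\to\overline{\mathcal{L}}\otimes\overline{\mathcal{L}}$ by $\mathfrak{s}(a,x\otimes y)=a(1,0)\otimes(1,0)+(0,x)\otimes(0,y)$. Then $(\mathfrak{s}\otimes\mathfrak{s})\circ R_1=R_2\circ(\mathfrak{s}\otimes\mathfrak{s})$.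
   Context: A (right) $3$-Leibniz algebra is a vector space $\mathcal{L}$ with a trilinear map $[\cdot,\cdot,\cdot]_{\mathcal{L}}$ such that $[[x_1,x_2,x_3]_{\mathcal{L}},y_1,y_2]_{\mathcal{L}}=[[x_1,y_1,y_2]_{\mathcal{L}},x_2,x_3]_{\mathcal{L}}+[x_1,[x_2,y_1,y_2]_{\mathcal{L}},x_3]_{\mathcal{L}}+[x_1,x_2,[x_3,y_1,y_2]_{\mathcal{L}}]_{\mathcal{L}}$. Both $R_1$ and $R_2$ are solutions of the Yang-Baxter equation; the claim says $\mathfrak{s}$ is a homomorphism between them. *)

theory Defs
  imports Complex_Main "HOL-Library.Poly_Mapping"
begin

text \<open>Concrete model of vector spaces over a field 'k: a vector space with basis indexed
by a type i is the space of finitely supported functions from i to k.  Every vector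
space is of this form (choice of a basis).  With this model, tensor products and
direct sums are again of this form.\<close>

lift_definition pscale :: "'k::field \<Rightarrow> ('i \<Rightarrow>\<^sub>0 'k) \<Rightarrow> ('i \<Rightarrow>\<^sub>0 'k)"
  is "\<lambda>c f i. c * f i"
  by (simp add: rev_finite_subset)

lift_definition tens :: "('i \<Rightarrow>\<^sub>0 'k::field) \<Rightarrow> ('j \<Rightarrow>\<^sub>0 'k) \<Rightarrow> ('i \<times> 'j \<Rightarrow>\<^sub>0 'k)"
  is "\<lambda>f g (i, j). f i * g j"
proof -
  fix f :: "'i \<Rightarrow> 'k" and g :: "'j \<Rightarrow> 'k"
  assume "finite {x. f x \<noteq> 0}" "finite {x. g x \<noteq> 0}"
  then have "finite ({x. f x \<noteq> 0} \<times> {x. g x \<noteq> 0})" by simp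
  moreover have "{x. (case x of (i, j) \<Rightarrow> f i * g j) \<noteq> 0} \<subseteq> {x. f x \<noteq> 0} \<times> {x. g x \<noteq> 0}"
    by auto
  ultimately show "finite {x. (case x of (i, j) \<Rightarrow> f i * g j) \<noteq> 0}"
    by (rule finite_subset[rotated])
qed

text \<open>Direct sum of K and V, with basis indexed by 'i option
(None for the K summand): dsum a x = (a, x).\<close>
lift_definition dsum :: "'k::field \<Rightarrow> ('i \<Rightarrow>\<^sub>0 'k) \<Rightarrow> ('i option \<Rightarrow>\<^sub>0 'k)"
  is "\<lambda>a f oo. case oo of None \<Rightarrow> a | Some i \<Rightarrow> f i"
proof -
  fix a :: 'k and f :: "'i \<Rightarrow> 'k"
  assume "finite {x. f x \<noteq> 0}"
  then have "finite (insert None (Some ` {x. f x \<noteq> 0}))" by simp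
  moreover have "{x. (case x of None \<Rightarrow> a | Some i \<Rightarrow> f i) \<noteq> 0} \<subseteq> insert None (Some ` {x. f x \<noteq> 0})"
  proof
    fix x assume "x \<in> {x. (case x of None \<Rightarrow> a | Some i \<Rightarrow> f i) \<noteq> 0}"
    then show "x \<in> insert None (Some ` {x. f x \<noteq> 0})" by (cases x) auto
  qed
  ultimately show "finite {x. (case x of None \<Rightarrow> a | Some i \<Rightarrow> f i) \<noteq> 0}"
    by (rule finite_subset[rotated])
qed

abbreviation klinear :: "(('i \<Rightarrow>\<^sub>0 'k::field) \<Rightarrow> ('j \<Rightarrow>\<^sub>0 'k)) \<Rightarrow> bool" where
  "klinear f \<equiv> Vector_Spaces.linear pscale pscale f"

definition leibniz3 :: "(('i \<Rightarrow>\<^sub>0 'k::field) \<Rightarrow> ('i \<Rightarrow>\<^sub>0 'k) \<Rightarrow> ('i \<Rightarrow>\<^sub>0 'k) \<Rightarrow> ('i \<Rightarrow>\<^sub>0 'k)) \<Rightarrow> bool" where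
  "leibniz3 br \<longleftrightarrow>
     (\<forall>y z. klinear (\<lambda>x. br x y z)) \<and>
     (\<forall>x z. klinear (\<lambda>y. br x y z)) \<and>
     (\<forall>x y. klinear (\<lambda>z. br x y z)) \<and>
     (\<forall>x1 x2 x3 y1 y2.
        br (br x1 x2 x3) y1 y2 =
          br (br x1 y1 y2) x2 x3 + br x1 (br x2 y1 y2) x3 + br x1 x2 (br x3 y1 y2))"

lemma lookup_tens:
  fixes u :: "'i \<Rightarrow>\<^sub>0 'k::field" and v :: "'j \<Rightarrow>\<^sub>0 'k"
  shows "Poly_Mapping.lookup (tens u v) (i, j) = Poly_Mapping.lookup u i * Poly_Mapping.lookup v j"
  by transfer simp

lemma lookup_dsum: "Poly_Mapping.lookup (dsum a u) None = a" "Poly_Mapping.lookup (dsum a u) (Some i) = Poly_Mapping.lookup u i"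
  by (transfer, simp) (transfer, simp)

end

theory Submission
  imports Defs
begin

text \<open>Both sides are linear, and every vector of \<open>(\<bbbK> \<oplus> L \<otimes> L) \<otimes> (\<bbbK> \<oplus> L \<otimes> L)\<close>
is a sum of tensors \<open>(a, x\<^sub>1 \<otimes> x\<^sub>2) \<otimes> (b, y\<^sub>1 \<otimes> y\<^sub>2)\<close>, so it suffices to compare them there.
On such a tensor \<open>s \<otimes> s\<close> produces four tensors of the shape on which \<open>R\<^sub>2\<close> is
prescribed. The swap parts of \<open>R\<^sub>2\<close> add up to the image of the swap part of \<open>R\<^sub>1\<close>;
of the bracket parts only the one coming from \<open>(0, x\<^sub>1) \<otimes> (0, x\<^sub>2) \<otimes> (0, y\<^sub>1) \<otimes> (0, y\<^sub>2)\<close>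
survives, since all others feed a zero argument into the trilinear bracket.\<close>

lemma klinear_zero: "klinear f \<Longrightarrow> f 0 = 0"
  by (simp add: linear_iff_module_hom module_hom.zero)

lemma klinear_add: "klinear f \<Longrightarrow> f (x + y) = f x + f y"
  by (simp add: linear_iff_module_hom module_hom.add)

lemma leibniz3_zero:
  assumes "leibniz3 br"
  shows "br 0 y z = 0" "br x 0 z = 0" "br x y 0 = 0"
  using assms unfolding leibniz3_def by (meson klinear_zero)+

lemma tens_add_left: "tens (x + y) z = tens x z + tens y z"
  by (rule poly_mapping_eqI) (auto simp: lookup_add lookup_tens algebra_simps)

lemma tens_add_right: "tens z (x + y) = tens z x + tens z y"
  by (rule poly_mapping_eqI) (auto simp: lookup_add lookup_tens algebra_simps)

lemma tens_zero_left [simp]: "tens 0 z = 0"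
  by (rule poly_mapping_eqI) (auto simp: lookup_tens)

lemma tens_zero_right [simp]: "tens z 0 = 0"
  by (rule poly_mapping_eqI) (auto simp: lookup_tens)

lemma pscale_tens_left: "pscale a (tens u v) = tens (pscale a u) v"
  by (rule poly_mapping_eqI) (auto simp: lookup_tens pscale.rep_eq)

lemma dsum_add: "dsum a x + dsum b y = dsum (a + b) (x + y)"
  by (rule poly_mapping_eqI, case_tac k) (auto simp: lookup_add lookup_dsum)

lemma dsum_zero [simp]: "dsum 0 0 = 0"
  by (rule poly_mapping_eqI, case_tac k) (auto simp: lookup_dsum)

lemma pscale_dsum: "pscale a (dsum b u) = dsum (a * b) (pscale a u)"
  by (rule poly_mapping_eqI, case_tac k) (auto simp: lookup_dsum pscale.rep_eq)

lemma pscale_zero [simp]: "pscale a 0 = 0"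
  by (rule poly_mapping_eqI) (simp add: pscale.rep_eq)

lemma single_pair_eq_tens:
  "Poly_Mapping.single (p, q) (c * d) = tens (Poly_Mapping.single p c) (Poly_Mapping.single q d)"
  by (rule poly_mapping_eqI) (auto simp: lookup_tens lookup_single when_def split: if_splits)

lemma single_None_eq_dsum: "Poly_Mapping.single None c = dsum c 0"
  by (rule poly_mapping_eqI, case_tac k) (auto simp: lookup_dsum lookup_single when_def)

lemma single_Some_eq_dsum: "Poly_Mapping.single (Some i) c = dsum 0 (Poly_Mapping.single i c)"
  by (rule poly_mapping_eqI, case_tac k) (auto simp: lookup_dsum lookup_single when_def)

lemma single_eq_dsum_tens:
  fixes p :: "('i \<times> 'j) option" and c :: "'k::field"
  obtains a x y where "Poly_Mapping.single p c = dsum a (tens x y)"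
proof (cases p)
  case None
  then show ?thesis
    using that[of c 0 0] by (simp add: single_None_eq_dsum)
next
  case (Some ij)
  then obtain i j where "p = Some (i, j)" by fastforce
  then show ?thesis
    using that single_pair_eq_tens[of i j c 1] by (simp add: single_Some_eq_dsum)
qed

lemma additive_poly_mapping_eqI:
  fixes f g :: "('a \<Rightarrow>\<^sub>0 'b::monoid_add) \<Rightarrow> 'c::cancel_comm_monoid_add"
  assumes f_add: "\<And>x y. f (x + y) = f x + f y"
    and g_add: "\<And>x y. g (x + y) = g x + g y"
    and single: "\<And>k c. f (Poly_Mapping.single k c) = g (Poly_Mapping.single k c)"
  shows "f = g"
proof
  fix w
  show "f w = g w"
  proof (induction w rule: update_induct)
    case const
    have "f 0 + f 0 = f 0 + 0" "g 0 + g 0 = g 0 + 0"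
      using f_add[of 0 0] g_add[of 0 0] by simp_all
    then show ?case by simp
  next
    case (update w k c)
    then have "Poly_Mapping.update k c w = w + Poly_Mapping.single k c"
      by (intro poly_mapping_eqI) (auto simp: lookup_add lookup_update lookup_single in_keys_iff)
    then show ?case
      by (simp add: f_add g_add single update.IH)
  qed
qed

lemma klinear_eq_on_pure_tensors:
  fixes f g :: "(('i \<times> 'j) option \<times> ('i \<times> 'j) option \<Rightarrow>\<^sub>0 'k::field) \<Rightarrow> ('l \<Rightarrow>\<^sub>0 'k)"
  assumes "klinear f" "klinear g"
    and pure: "\<And>a x1 x2 b y1 y2. f (tens (dsum a (tens x1 x2)) (dsum b (tens y1 y2)))
                                = g (tens (dsum a (tens x1 x2)) (dsum b (tens y1 y2)))"
  shows "f = g"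
proof (rule additive_poly_mapping_eqI)
  fix k :: "('i \<times> 'j) option \<times> ('i \<times> 'j) option" and c :: 'k
  obtain p q where k: "k = (p, q)" by fastforce
  obtain a x1 x2 where "Poly_Mapping.single p c = dsum a (tens x1 x2)"
    by (rule single_eq_dsum_tens)
  moreover obtain b y1 y2 where "Poly_Mapping.single q (1::'k) = dsum b (tens y1 y2)"
    by (rule single_eq_dsum_tens)
  ultimately show "f (Poly_Mapping.single k c) = g (Poly_Mapping.single k c)"
    using single_pair_eq_tens[of p q c 1] pure by (simp add: k)
qed (use assms klinear_add in blast)+

theorem proposition5p8:
  fixes br :: "('i \<Rightarrow>\<^sub>0 'k::field) \<Rightarrow> ('i \<Rightarrow>\<^sub>0 'k) \<Rightarrow> ('i \<Rightarrow>\<^sub>0 'k) \<Rightarrow> ('i \<Rightarrow>\<^sub>0 'k)"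
    and R1 :: "(('i \<times> 'i) option \<times> ('i \<times> 'i) option \<Rightarrow>\<^sub>0 'k)
               \<Rightarrow> (('i \<times> 'i) option \<times> ('i \<times> 'i) option \<Rightarrow>\<^sub>0 'k)"
    and R2 :: "((('i option \<times> 'i option) \<times> ('i option \<times> 'i option)) \<Rightarrow>\<^sub>0 'k)
               \<Rightarrow> ((('i option \<times> 'i option) \<times> ('i option \<times> 'i option)) \<Rightarrow>\<^sub>0 'k)"
    and s :: "(('i \<times> 'i) option \<Rightarrow>\<^sub>0 'k) \<Rightarrow> ('i option \<times> 'i option \<Rightarrow>\<^sub>0 'k)"
    and ss :: "(('i \<times> 'i) option \<times> ('i \<times> 'i) option \<Rightarrow>\<^sub>0 'k)
               \<Rightarrow> ((('i option \<times> 'i option) \<times> ('i option \<times> 'i option)) \<Rightarrow>\<^sub>0 'k)"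
  assumes L: "leibniz3 br"
    and R1_lin: "klinear R1"
    and R1_def: "\<And>a x1 x2 b y1 y2.
       R1 (tens (dsum a (tens x1 x2)) (dsum b (tens y1 y2))) =
         tens (dsum b (tens y1 y2)) (dsum a (tens x1 x2))
         + tens (dsum 1 0) (dsum 0 (tens (br x1 y1 y2) x2 + tens x1 (br x2 y1 y2)))"
    and R2_lin: "klinear R2"
    and R2_def: "\<And>a1 x1 a2 x2 b1 y1 b2 y2.
       R2 (tens (tens (dsum a1 x1) (dsum a2 x2)) (tens (dsum b1 y1) (dsum b2 y2))) =
         tens (tens (dsum b1 y1) (dsum b2 y2)) (tens (dsum a1 x1) (dsum a2 x2))
         + tens (tens (dsum 1 0) (dsum 1 0))
             (tens (dsum 0 (br x1 y1 y2)) (dsum a2 x2) + tens (dsum a1 x1) (dsum 0 (br x2 y1 y2)))"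
    and s_lin: "klinear s"
    and s_def: "\<And>a x y. s (dsum a (tens x y)) =
                   pscale a (tens (dsum 1 0) (dsum 1 0)) + tens (dsum 0 x) (dsum 0 y)"
    and ss_lin: "klinear ss"
    and ss_def: "\<And>u v. ss (tens u v) = tens (s u) (s v)"
  shows "ss \<circ> R1 = R2 \<circ> ss"
proof -
  have br_zero: "br 0 y z = 0" "br x 0 z = 0" "br x y 0 = 0" for x y z
    using leibniz3_zero[OF L] by blast+
  have s_pure: "s (dsum a (tens x y)) = tens (dsum a 0) (dsum 1 0) + tens (dsum 0 x) (dsum 0 y)"
    for a x y
    by (simp add: s_def pscale_tens_left pscale_dsum)
  have s_unit: "s (dsum 1 0) = tens (dsum 1 0) (dsum 1 0)"
    using s_pure[of 1 0 0] by simp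
  have s_bracket_part: "s (dsum 0 (tens x y + tens z w))
      = tens (dsum 0 x) (dsum 0 y) + tens (dsum 0 z) (dsum 0 w)" for x y z w
    using klinear_add[OF s_lin, of "dsum 0 (tens x y)" "dsum 0 (tens z w)"]
    by (simp add: s_pure dsum_add)
  have "ss (R1 (tens (dsum a (tens x1 x2)) (dsum b (tens y1 y2))))
      = R2 (ss (tens (dsum a (tens x1 x2)) (dsum b (tens y1 y2))))" for a x1 x2 b y1 y2
    by (simp only: R1_def ss_def klinear_add[OF ss_lin] s_pure s_unit s_bracket_part
          tens_add_left tens_add_right klinear_add[OF R2_lin] R2_def)
      (simp add: br_zero tens_add_left tens_add_right)
  then show ?thesis
    by (intro klinear_eq_on_pure_tensors Vector_Spaces.linear_compose[OF R1_lin ss_lin]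
        Vector_Spaces.linear_compose[OF ss_lin R2_lin]) simp
qed

end
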